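(* Let $A_0\in\mathbb{R}^{n\times n}$, $B\in\mathbb{R}^{n\times m}$, $K\in\mathbb{R}^{m\times n}$, $P_0\in\mathbb{R}^{n\times n}$ symmetric, $H\in\mathbb{R}^{m\times m}$ diagonal, and $V(x)=\tfrac12\big(x^\top P_0x+x^\top K^\top HKx-\mathrm{dz}(Kx)^\top H\,\mathrm{dz}(Kx)\big)$. Suppose there is a diagonal $M\succeq0$ with $P_0B-A_0^\top K^\top H=K^\top M$ and $2M+\Omega\succ0$, where $\Omega:=HKB+B^\top K^\top H$. Then, with $S_0:=-(P_0A_0+A_0^\top P_0)$, the directional derivative of $V$ along $\dot x=A_0x-B\,\mathrm{sat}(Kx)$ satisfies, for almost all $x\in\mathbb{R}^n$, $$\dot V(x)=-\tfrac12\begin{bmatrix}x\\ \mathrm{dz}(Kx)\end{bmatrix}^\top Q\begin{bmatrix}x\\ \mathrm{dz}(Kx)\end{bmatrix},\quad Q=\begin{bmatrix}S_0+K^\top(2M+\Omega)K&-K^\top(M+\Omega)\\ -(M+\Omega)K&\Omega\end{bmatrix}.$$ Moreover, if $P_0\succeq0$ and $P_0A_0+A_0^\top P_0\preceq0$, then there exist a diagonal $T_0\succeq0$ and a symmetric $R\succ0$ with $\tfrac12Q-\Sigma_0-\Sigma_R\succeq0$; in particular $-\dot V(x)\ge\lambda_{\min}(R)|\mathrm{sat}(Kx)|^2$ for almost all $x$.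
   Context: Decentralized saturation $\mathrm{sat}(u)_i=\min\{\overline{u}_i,\max\{-\underline{u}_i,u_i\}\}$ with $\overline{u}_i,\underline{u}_i>0$; $\mathrm{dz}(u)=u-\mathrm{sat}(u)$. $\Sigma_0=\begin{bmatrix}0&K^\top T_0\\ T_0K&-2T_0\end{bmatrix}$, $\Sigma_R=\begin{bmatrix}K^\top RK&-K^\top R\\ -RK&R\end{bmatrix}$. *)

theory Defs
  imports "HOL-Analysis.Analysis"
begin

definition sat :: "real^'m \<Rightarrow> real^'m \<Rightarrow> real^'m \<Rightarrow> real^'m" where
  "sat ub lb u = (\<chi> i. min (ub $ i) (max (- (lb $ i)) (u $ i)))"

definition dz :: "real^'m \<Rightarrow> real^'m \<Rightarrow> real^'m \<Rightarrow> real^'m" where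
  "dz ub lb u = u - sat ub lb u"

definition diag_mat :: "real^'m^'m \<Rightarrow> bool" where
  "diag_mat H \<longleftrightarrow> (\<forall>i j. i \<noteq> j \<longrightarrow> H $ i $ j = 0)"

definition psd_mat :: "real^'n^'n \<Rightarrow> bool" where
  "psd_mat A \<longleftrightarrow> transpose A = A \<and> (\<forall>x. x \<bullet> (A *v x) \<ge> 0)"

definition pd_mat :: "real^'n^'n \<Rightarrow> bool" where
  "pd_mat A \<longleftrightarrow> transpose A = A \<and> (\<forall>x. x \<noteq> 0 \<longrightarrow> x \<bullet> (A *v x) > 0)"

definition lambda_min :: "real^'n^'n \<Rightarrow> real" where
  "lambda_min A = Min {l. \<exists>v. v \<noteq> 0 \<and> A *v v = l *\<^sub>R v}"

definition block_vec :: "real^'n \<Rightarrow> real^'m \<Rightarrow> real^('n + 'm)" where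
  "block_vec x w = (\<chi> i. case i of Inl j \<Rightarrow> x $ j | Inr j \<Rightarrow> w $ j)"

definition block_mat :: "real^'n^'n \<Rightarrow> real^'m^'n \<Rightarrow> real^'n^'m \<Rightarrow> real^'m^'m
    \<Rightarrow> real^('n + 'm)^('n + 'm)" where
  "block_mat A B C D = (\<chi> i k. case i of
       Inl i' \<Rightarrow> (case k of Inl k' \<Rightarrow> A $ i' $ k' | Inr k' \<Rightarrow> B $ i' $ k')
     | Inr i' \<Rightarrow> (case k of Inl k' \<Rightarrow> C $ i' $ k' | Inr k' \<Rightarrow> D $ i' $ k'))"

definition Sigma0 :: "real^'n^'m \<Rightarrow> real^'m^'m \<Rightarrow> real^('n + 'm)^('n + 'm)" where
  "Sigma0 K T0 = block_mat 0 (transpose K ** T0) (T0 ** K) (- (2 *\<^sub>R T0))"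

definition SigmaR :: "real^'n^'m \<Rightarrow> real^'m^'m \<Rightarrow> real^('n + 'm)^('n + 'm)" where
  "SigmaR K R = block_mat (transpose K ** R ** K) (- (transpose K ** R)) (- (R ** K)) R"

definition Omega_mat :: "real^'m^'m \<Rightarrow> real^'n^'m \<Rightarrow> real^'m^'n \<Rightarrow> real^'m^'m" where
  "Omega_mat H K B = H ** K ** B + transpose B ** transpose K ** H"

definition S0_mat :: "real^'n^'n \<Rightarrow> real^'n^'n \<Rightarrow> real^'n^'n" where
  "S0_mat P0 A0 = - (P0 ** A0 + transpose A0 ** P0)"

definition Q_mat :: "real^'n^'n \<Rightarrow> real^'n^'n \<Rightarrow> real^'m^'n \<Rightarrow> real^'n^'m
    \<Rightarrow> real^'m^'m \<Rightarrow> real^'m^'m \<Rightarrow> real^('n + 'm)^('n + 'm)" where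
  "Q_mat P0 A0 B K H M =
     block_mat (S0_mat P0 A0 + transpose K ** (2 *\<^sub>R M + Omega_mat H K B) ** K)
       (- (transpose K ** (M + Omega_mat H K B)))
       (- ((M + Omega_mat H K B) ** K))
       (Omega_mat H K B)"

end

theory Submission
  imports Defs
begin

(* Each coordinate term y^2 - dz(y)^2 of V is C^1 with derivative 2 sat(y), so V is differentiable
   along every direction, and along f its derivative is x'P0 f + sat(Kx)'HKf at every point.
   Substituting P0 B = A0'K'H + K'M and sat(Kx) = Kx - dz(Kx) turns this into -1/2 z'Qz with
   z = (x, dz(Kx)).  Take T0 = M/2 and R = (m/2) I, where m > 0 is a coercivity constant of
   2M + Omega.  At z = (x, d), with s = Kx - d, the quadratic form of 1/2 Q - Sigma0 - SigmaR is
   1/2 x'S0 x + 1/2 (s'(2M + Omega)s - m|s|^2) >= 0.  Finally z'Sigma0 z = dz(Kx)'M sat(Kx) >= 0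
   (sector property of the dead zone) and z'SigmaR z = (m/2)|sat(Kx)|^2, so that
   -dV >= (m/2)|sat(Kx)|^2 = lambda_min(R)|sat(Kx)|^2. *)

lemma transpose_add: "transpose (A + B) = transpose A + transpose (B::'a::semiring_1^'n^'m)"
  by (simp add: transpose_def vec_eq_iff)

lemma transpose_diff: "transpose (A - B) = transpose A - transpose (B::'a::ring_1^'n^'m)"
  by (simp add: transpose_def vec_eq_iff)

lemma transpose_uminus: "transpose (- A) = - transpose (A::'a::ring_1^'n^'m)"
  by (simp add: transpose_def vec_eq_iff)

lemma transpose_zero: "transpose (0::'a::semiring_1^'n^'m) = 0"
  by (simp add: transpose_def vec_eq_iff)

lemma matrix_vector_mult_uminus: "(- A) *v x = - (A *v (x::'a::ring_1^'n))"
  by (simp add: matrix_vector_mult_def vec_eq_iff sum_negf)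

lemma inner_transpose_matrix_vector: "u \<bullet> (transpose A *v w) = (A *v u) \<bullet> (w::real^'m)"
  by (metis dot_lmul_matrix inner_commute transpose_matrix_vector)

lemma inner_matrix_vector_commute:
  "transpose A = A \<Longrightarrow> u \<bullet> (A *v w) = w \<bullet> (A *v (u::real^'n))"
  by (metis inner_commute inner_transpose_matrix_vector)

lemma inner_congruence_form:
  "x \<bullet> ((transpose K ** W ** K) *v x) = (K *v x) \<bullet> (W *v (K *v (x::real^'n)))"
  by (simp add: matrix_vector_mul_assoc[symmetric] inner_transpose_matrix_vector
      del: transpose_matrix_vector)

lemmas matrix_vector_inner_simps = matrix_vector_mult_add_rdistrib
  matrix_vector_mult_diff_rdistrib matrix_vector_mult_uminus scaleR_matrix_vector_assoc[symmetric]
  matrix_vector_mul_assoc[symmetric] matrix_vector_right_distrib matrix_vector_mult_diff_distrib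
  matrix_vector_mult_scaleR inner_add_right inner_add_left inner_diff_right inner_diff_left
  inner_minus_right inner_minus_left inner_scaleR_right inner_scaleR_left

lemma diag_mat_transpose: "diag_mat H \<Longrightarrow> transpose H = H"
  by (auto simp: diag_mat_def transpose_def vec_eq_iff) metis

lemma matrix_vector_mult_diag_nth: "diag_mat H \<Longrightarrow> (H *v w) $ i = H $ i $ i * w $ i"
  unfolding matrix_vector_mult_def diag_mat_def
  by (simp add: sum.neutral[where A = "UNIV - {i}"] sum.remove[where x = i])

lemma inner_diag_mat:
  "diag_mat H \<Longrightarrow> (u::real^'m) \<bullet> (H *v w) = (\<Sum>i\<in>UNIV. H $ i $ i * u $ i * w $ i)"
  by (simp add: inner_vec_def matrix_vector_mult_diag_nth mult_ac)

lemma psd_diag_mat_nonneg: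
  assumes "diag_mat M" "psd_mat M"
  shows "M $ i $ i \<ge> 0"
proof -
  have "axis i (1::real) \<bullet> (M *v axis i 1) = M $ i $ i"
    using assms(1) by (simp add: inner_diag_mat axis_def if_distrib cong: if_cong)
  then show ?thesis
    using assms(2) unfolding psd_mat_def by metis
qed

lemma diag_mat_scaleR: "diag_mat M \<Longrightarrow> diag_mat (c *\<^sub>R M)"
  by (simp add: diag_mat_def)

lemma psd_mat_scaleR: "psd_mat M \<Longrightarrow> c \<ge> 0 \<Longrightarrow> psd_mat (c *\<^sub>R M)"
  by (simp add: psd_mat_def transpose_scalar flip: scaleR_matrix_vector_assoc)

lemma pd_mat_scaleR_mat_1: "c > 0 \<Longrightarrow> pd_mat (c *\<^sub>R mat 1 :: real^'n^'n)"
  by (simp add: pd_mat_def transpose_scalar flip: scaleR_matrix_vector_assoc)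

lemma sum_UNIV_Plus:
  "(\<Sum>i\<in>(UNIV::('a::finite + 'b::finite) set). g i) = (\<Sum>j\<in>UNIV. g (Inl j)) + (\<Sum>j\<in>UNIV. g (Inr j))"
  by (subst UNIV_Plus_UNIV[symmetric], subst sum.Plus) (simp_all add: comp_def)

lemma inner_block_vec: "block_vec x d \<bullet> block_vec x' d' = x \<bullet> x' + d \<bullet> d'"
  by (simp add: inner_vec_def sum_UNIV_Plus block_vec_def)

lemma block_mat_mult_block_vec:
  "block_mat A B C D *v block_vec x d = block_vec (A *v x + B *v d) (C *v x + D *v d)"
  by (simp add: vec_eq_iff block_mat_def block_vec_def matrix_vector_mult_def sum_UNIV_Plus
      split: sum.splits)

lemma quadratic_form_block_mat:
  "block_vec x d \<bullet> (block_mat A B C D *v block_vec x d)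
     = x \<bullet> (A *v x) + x \<bullet> (B *v d) + d \<bullet> (C *v x) + d \<bullet> (D *v d)"
  by (simp add: block_mat_mult_block_vec inner_block_vec inner_add_right)

lemma block_vec_cases: obtains x d where "z = block_vec x d"
proof
  show "z = block_vec (\<chi> j. z $ Inl j) (\<chi> j. z $ Inr j)"
    by (simp add: vec_eq_iff block_vec_def split: sum.splits)
qed

lemma transpose_block_mat:
  "transpose (block_mat A B C D) = block_mat (transpose A) (transpose C) (transpose B) (transpose D)"
  by (simp add: transpose_def block_mat_def vec_eq_iff split: sum.splits)

lemma scaleR_block_mat:
  "c *\<^sub>R block_mat A B C D = block_mat (c *\<^sub>R A) (c *\<^sub>R B) (c *\<^sub>R C) (c *\<^sub>R D)"
  by (simp add: block_mat_def vec_eq_iff split: sum.splits)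

lemma diff_block_mat:
  "block_mat A B C D - block_mat A' B' C' D' = block_mat (A - A') (B - B') (C - C') (D - D')"
  by (simp add: block_mat_def vec_eq_iff split: sum.splits)

lemma pd_mat_coercive:
  fixes W :: "real^'m^'m"
  assumes "pd_mat W"
  obtains m where "m > 0" "\<And>u. m * (u \<bullet> u) \<le> u \<bullet> (W *v u)"
proof -
  have "\<exists>u0\<in>sphere 0 1. \<forall>u\<in>sphere 0 1. u0 \<bullet> (W *v u0) \<le> u \<bullet> (W *v u)"
  proof (rule continuous_attains_inf)
    show "sphere (0::real^'m) 1 \<noteq> {}"
      by (metis norm_axis_1 mem_sphere_0 empty_iff)
  qed (auto intro!: continuous_intros)
  then obtain u0 where u0: "norm u0 = 1"
    and min: "\<And>u. norm u = 1 \<Longrightarrow> u0 \<bullet> (W *v u0) \<le> u \<bullet> (W *v u)"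
    by (auto simp: sphere_def)
  have "u0 \<bullet> (W *v u0) > 0"
    using assms u0 unfolding pd_mat_def by (metis norm_zero zero_neq_one)
  moreover have "(u0 \<bullet> (W *v u0)) * (u \<bullet> u) \<le> u \<bullet> (W *v u)" for u
  proof (cases "u = 0")
    case False
    define u' where "u' = (1 / norm u) *\<^sub>R u"
    have "norm u' = 1" and u: "u = norm u *\<^sub>R u'"
      using False by (simp_all add: u'_def)
    have "u \<bullet> (W *v u) = (u \<bullet> u) * (u' \<bullet> (W *v u'))"
      by (subst (1 2) u) (simp add: matrix_vector_mult_scaleR power2_eq_square flip: power2_norm_eq_inner)
    then show ?thesis
      using min[OF \<open>norm u' = 1\<close>] by (simp add: mult.commute mult_left_mono)
  qed simp
  ultimately show ?thesis using that by blast
qed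

lemma lambda_min_scaleR_mat_1: "lambda_min (c *\<^sub>R mat 1 :: real^'n^'n) = c"
proof -
  have "{l. \<exists>v. v \<noteq> 0 \<and> (c *\<^sub>R mat 1 :: real^'n^'n) *v v = l *\<^sub>R v} = {c}"
  proof (intro set_eqI iffI)
    fix l assume "l \<in> {l. \<exists>v. v \<noteq> 0 \<and> (c *\<^sub>R mat 1 :: real^'n^'n) *v v = l *\<^sub>R v}"
    then obtain v :: "real^'n" where "v \<noteq> 0" "c *\<^sub>R v = l *\<^sub>R v"
      by (auto simp flip: scaleR_matrix_vector_assoc)
    then show "l \<in> {c}"
      by simp
  next
    fix l assume "l \<in> {c}"
    then show "l \<in> {l. \<exists>v. v \<noteq> 0 \<and> (c *\<^sub>R mat 1 :: real^'n^'n) *v v = l *\<^sub>R v}"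
      using axis_eq_0_iff[of undefined "1::real"] by (auto simp flip: scaleR_matrix_vector_assoc)
  qed
  then show ?thesis
    unfolding lambda_min_def by simp
qed

lemma has_real_derivative_of_quadratic_remainder:
  fixes f :: "real \<Rightarrow> real"
  assumes "\<And>h. \<bar>f (x + h) - f x - D * h\<bar> \<le> C * h\<^sup>2"
  shows "(f has_real_derivative D) (at x)"
  unfolding DERIV_def
proof (rule Lim_null_comparison[THEN LIM_zero_cancel])
  show "\<forall>\<^sub>F h in at 0. norm ((f (x + h) - f x) / h - D) \<le> C * \<bar>h\<bar>"
  proof (rule eventually_at_topological[THEN iffD2], intro exI[of _ UNIV] conjI ballI impI)
    fix h :: real assume "h \<noteq> 0"
    then have "(f (x + h) - f x) / h - D = (f (x + h) - f x - D * h) / h"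
      by (simp add: diff_divide_distrib)
    then have "norm ((f (x + h) - f x) / h - D) = \<bar>f (x + h) - f x - D * h\<bar> / \<bar>h\<bar>"
      by simp
    also have "\<dots> \<le> C * h\<^sup>2 / \<bar>h\<bar>"
      using assms by (simp add: divide_right_mono)
    also have "\<dots> = C * \<bar>h\<bar>"
      by (auto simp: power2_eq_square abs_if)
    finally show "norm ((f (x + h) - f x) / h - D) \<le> C * \<bar>h\<bar>" .
  qed simp_all
  show "((\<lambda>h. C * \<bar>h\<bar>) \<longlongrightarrow> 0) (at 0)"
    by (intro tendsto_eq_intros) auto
qed

lemma square_minus_clamp_dist_remainder:
  fixes l u y h :: real
  assumes "l \<le> u"
  defines "c \<equiv> \<lambda>y. min u (max l y)"
  shows "\<bar>((y + h)\<^sup>2 - (y + h - c (y + h))\<^sup>2) - (y\<^sup>2 - (y - c y)\<^sup>2) - 2 * c y * h\<bar> \<le> h\<^sup>2"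
proof -
  define e where "e = c (y + h) - c y"
  \<comment> \<open>The clamp is monotone, so by the two expansions below the remainder lies
    between 0 and h^2.\<close>
  have "e * (y + h - c (y + h)) \<ge> 0"
    using assms unfolding e_def c_def
    by (auto simp: min_def max_def intro: mult_nonneg_nonneg mult_nonpos_nonpos)
  moreover have "e * (y - c y) \<le> 0"
    using assms unfolding e_def c_def
    by (auto simp: min_def max_def intro: mult_nonneg_nonpos mult_nonpos_nonneg)
  moreover have "((y + h)\<^sup>2 - (y + h - c (y + h))\<^sup>2) - (y\<^sup>2 - (y - c y)\<^sup>2) - 2 * c y * h
      = 2 * (e * (y + h - c (y + h))) + e\<^sup>2"
    "((y + h)\<^sup>2 - (y + h - c (y + h))\<^sup>2) - (y\<^sup>2 - (y - c y)\<^sup>2) - 2 * c y * h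
      = h\<^sup>2 - (h - e)\<^sup>2 + 2 * (e * (y - c y))"
    unfolding e_def by (simp_all add: power2_eq_square algebra_simps)
  ultimately show ?thesis
    by (smt (verit) zero_le_power2)
qed

lemma has_real_derivative_square_minus_clamp_dist:
  fixes l u y :: real
  assumes "l \<le> u"
  shows "((\<lambda>y. y\<^sup>2 - (y - min u (max l y))\<^sup>2) has_real_derivative 2 * min u (max l y)) (at y)"
  using square_minus_clamp_dist_remainder[OF assms]
  by (intro has_real_derivative_of_quadratic_remainder[where C = 1]) (simp add: mult_ac)

lemma sat_nth: "sat ub lb u $ i = min (ub $ i) (max (- lb $ i) (u $ i))"
  by (simp add: sat_def)

lemma diff_dz_eq_sat: "u - dz ub lb u = sat ub lb u"
  by (simp add: dz_def)

lemma inner_dz_sat_nonneg: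
  assumes "diag_mat M" "psd_mat M" "\<forall>i. 0 \<le> ub $ i" "\<forall>i. 0 \<le> lb $ i"
  shows "0 \<le> dz ub lb u \<bullet> (M *v sat ub lb u)"
  unfolding inner_diag_mat[OF assms(1)]
proof (intro sum_nonneg)
  fix i
  have "0 \<le> dz ub lb u $ i * sat ub lb u $ i"
    using assms(3,4)[rule_format, of i]
    by (auto simp: dz_def sat_def min_def max_def zero_le_mult_iff mult_le_0_iff)
  then show "0 \<le> M $ i $ i * dz ub lb u $ i * sat ub lb u $ i"
    using psd_diag_mat_nonneg[OF assms(1,2)] by (simp add: mult.assoc)
qed

lemma inner_minus_inner_dz_diag:
  assumes "diag_mat H"
  shows "w \<bullet> (H *v w) - dz ub lb w \<bullet> (H *v dz ub lb w)
    = (\<Sum>i\<in>UNIV. H $ i $ i * ((w $ i)\<^sup>2 - (w $ i - sat ub lb w $ i)\<^sup>2))"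
  unfolding inner_diag_mat[OF assms] sum_subtractf[symmetric]
  by (rule sum.cong) (simp_all add: dz_def power2_eq_square algebra_simps)

definition lyapunov :: "real^'n^'n \<Rightarrow> real^'n^'m \<Rightarrow> real^'m^'m \<Rightarrow> real^'m \<Rightarrow> real^'m
    \<Rightarrow> real^'n \<Rightarrow> real" where
  "lyapunov P0 K H ub lb x = 1/2 * (x \<bullet> (P0 *v x) + (K *v x) \<bullet> (H *v (K *v x))
     - dz ub lb (K *v x) \<bullet> (H *v dz ub lb (K *v x)))"

lemma has_real_derivative_lyapunov_along:
  assumes H: "diag_mat H" and P0: "transpose P0 = P0" and bounds: "\<forall>i. - lb $ i \<le> ub $ i"
  shows "((\<lambda>t. lyapunov P0 K H ub lb (x + t *\<^sub>R v)) has_real_derivative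
           x \<bullet> (P0 *v v) + sat ub lb (K *v x) \<bullet> (H *v (K *v v))) (at 0)"
proof -
  define g where "g i y = y\<^sup>2 - (y - min (ub $ i) (max (- lb $ i) y))\<^sup>2" for i y
  have expand: "lyapunov P0 K H ub lb (x + t *\<^sub>R v)
      = 1/2 * (x \<bullet> (P0 *v x) + 2 * t * (x \<bullet> (P0 *v v)) + t\<^sup>2 * (v \<bullet> (P0 *v v))
          + (\<Sum>i\<in>UNIV. H $ i $ i * g i ((K *v x) $ i + t * (K *v v) $ i)))" for t
  proof -
    have "lyapunov P0 K H ub lb y = 1/2 * (y \<bullet> (P0 *v y) + (\<Sum>i\<in>UNIV. H $ i $ i * g i ((K *v y) $ i)))"
      for y
      unfolding lyapunov_def add_diff_eq[symmetric] inner_minus_inner_dz_diag[OF H]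
      by (simp add: g_def sat_nth)
    moreover have "(x + t *\<^sub>R v) \<bullet> (P0 *v (x + t *\<^sub>R v))
        = x \<bullet> (P0 *v x) + 2 * t * (x \<bullet> (P0 *v v)) + t\<^sup>2 * (v \<bullet> (P0 *v v))"
      using inner_matrix_vector_commute[OF P0, of v x]
      by (simp add: matrix_vector_inner_simps power2_eq_square algebra_simps)
    ultimately show ?thesis
      by (simp add: matrix_vector_inner_simps)
  qed
  have "((\<lambda>t. g i ((K *v x) $ i + t * (K *v v) $ i)) has_real_derivative
           2 * sat ub lb (K *v x) $ i * (K *v v) $ i) (at 0)" for i
  proof -
    have "(g i has_real_derivative 2 * sat ub lb (K *v x) $ i) (at ((K *v x) $ i + 0 * (K *v v) $ i))"
      unfolding g_def sat_nth
      using has_real_derivative_square_minus_clamp_dist bounds by simp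
    then show ?thesis
      by (rule DERIV_chain2) (auto intro!: derivative_eq_intros)
  qed
  then have "((\<lambda>t. lyapunov P0 K H ub lb (x + t *\<^sub>R v)) has_real_derivative
      1/2 * (2 * (x \<bullet> (P0 *v v)) + (\<Sum>i\<in>UNIV. 2 * sat ub lb (K *v x) $ i * (K *v v) $ i * H $ i $ i)))
      (at 0)"
    unfolding expand by (auto intro!: derivative_eq_intros DERIV_sum)
  moreover have "(\<Sum>i\<in>UNIV. 2 * sat ub lb (K *v x) $ i * (K *v v) $ i * H $ i $ i)
      = 2 * (sat ub lb (K *v x) \<bullet> (H *v (K *v v)))"
    by (simp add: inner_diag_mat[OF H] sum_distrib_left mult_ac)
  ultimately show ?thesis
    by (simp add: add_divide_distrib)
qed

lemma inner_S0_mat: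
  "transpose P0 = P0 \<Longrightarrow> x \<bullet> (S0_mat P0 A0 *v x) = - 2 * (x \<bullet> (P0 *v (A0 *v x)))"
  using inner_transpose_matrix_vector[of x A0 "P0 *v x"] inner_matrix_vector_commute[of P0 x "A0 *v x"]
  by (simp add: S0_mat_def matrix_vector_inner_simps del: transpose_matrix_vector)

lemma inner_Omega_mat:
  assumes "transpose H = H"
  shows "u \<bullet> (Omega_mat H K B *v w) = u \<bullet> (H *v (K *v (B *v w))) + w \<bullet> (H *v (K *v (B *v u)))"
proof -
  have "u \<bullet> ((transpose B ** transpose K ** H) *v w) = (K *v (B *v u)) \<bullet> (H *v w)"
    by (simp only: matrix_vector_mul_assoc[symmetric] inner_transpose_matrix_vector)
  also have "\<dots> = w \<bullet> (H *v (K *v (B *v u)))"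
    by (rule inner_matrix_vector_commute[OF assms])
  finally show ?thesis
    by (simp add: Omega_mat_def matrix_vector_mult_add_rdistrib inner_add_right
        matrix_vector_mul_assoc[symmetric] del: transpose_matrix_vector)
qed

lemma transpose_Omega_mat: "transpose H = H \<Longrightarrow> transpose (Omega_mat H K B) = Omega_mat H K B"
  by (simp add: Omega_mat_def transpose_add matrix_transpose_mul matrix_mul_assoc add.commute)

lemma quadratic_form_Q_mat:
  assumes H: "transpose H = H" and M: "transpose M = M"
  shows "block_vec x d \<bullet> (Q_mat P0 A0 B K H M *v block_vec x d)
    = x \<bullet> (S0_mat P0 A0 *v x) + 2 * ((K *v x) \<bullet> (M *v (K *v x - d)))
      + (K *v x - d) \<bullet> (Omega_mat H K B *v (K *v x - d))"
proof -
  have "x \<bullet> ((transpose K ** W) *v d) = (K *v x) \<bullet> (W *v d)"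
    and "d \<bullet> ((W ** K) *v x) = d \<bullet> (W *v (K *v x))" for W
    by (simp_all add: matrix_vector_mul_assoc[symmetric] inner_transpose_matrix_vector
        del: transpose_matrix_vector)
  then show ?thesis
    using inner_matrix_vector_commute[OF M, of d "K *v x"]
    by (simp add: Q_mat_def quadratic_form_block_mat inner_congruence_form inner_Omega_mat[OF H]
        matrix_vector_mult_add_rdistrib matrix_vector_mult_uminus scaleR_matrix_vector_assoc[symmetric]
        matrix_vector_mult_diff_distrib inner_add_right inner_diff_right inner_diff_left
        inner_minus_right algebra_simps del: transpose_matrix_vector)
qed

lemma quadratic_form_Sigma0:
  assumes "transpose T0 = T0"
  shows "block_vec x d \<bullet> (Sigma0 K T0 *v block_vec x d) = 2 * (d \<bullet> (T0 *v (K *v x - d)))"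
  using inner_transpose_matrix_vector[of x K "T0 *v d"] inner_matrix_vector_commute[OF assms, of d "K *v x"]
  by (simp add: Sigma0_def quadratic_form_block_mat matrix_vector_inner_simps del: transpose_matrix_vector)

lemma quadratic_form_SigmaR:
  assumes "transpose R = R"
  shows "block_vec x d \<bullet> (SigmaR K R *v block_vec x d) = (K *v x - d) \<bullet> (R *v (K *v x - d))"
  using inner_transpose_matrix_vector[of x K "R *v d"] inner_matrix_vector_commute[OF assms, of d "K *v x"]
    inner_congruence_form[of x K R]
  by (simp add: SigmaR_def quadratic_form_block_mat
      matrix_vector_inner_simps del: transpose_matrix_vector)

lemma lyapunov_derivative_eq_quadratic_form_Q_mat:
  fixes x :: "real^'n" and d :: "real^'m"
  assumes H: "transpose H = H" and P0: "transpose P0 = P0" and M: "transpose M = M"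
    and eq: "P0 ** B - transpose A0 ** transpose K ** H = transpose K ** M"
  defines "s \<equiv> K *v x - d"
  shows "x \<bullet> (P0 *v (A0 *v x - B *v s)) + s \<bullet> (H *v (K *v (A0 *v x - B *v s)))
    = - 1/2 * (block_vec x d \<bullet> (Q_mat P0 A0 B K H M *v block_vec x d))"
proof -
  have "x \<bullet> (P0 *v (B *v s)) = x \<bullet> ((transpose A0 ** transpose K ** H + transpose K ** M) *v s)"
    using eq by (simp add: matrix_vector_mul_assoc algebra_simps)
  also have "\<dots> = (K *v (A0 *v x)) \<bullet> (H *v s) + (K *v x) \<bullet> (M *v s)"
    by (simp only: matrix_vector_mult_add_rdistrib inner_add_right matrix_vector_mul_assoc[symmetric]
        inner_transpose_matrix_vector)
  finally have "x \<bullet> (P0 *v (B *v s)) = s \<bullet> (H *v (K *v (A0 *v x))) + (K *v x) \<bullet> (M *v s)"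
    using inner_matrix_vector_commute[OF H, of s "K *v (A0 *v x)"] by simp
  then show ?thesis
    unfolding quadratic_form_Q_mat[OF H M] inner_S0_mat[OF P0] inner_Omega_mat[OF H] s_def[symmetric]
    by (simp add: matrix_vector_mult_diff_distrib inner_diff_right field_simps)
qed

lemma psd_half_Q_mat_minus_Sigmas:
  assumes H: "transpose H = H" and M: "transpose M = M" and S0: "psd_mat (S0_mat P0 A0)"
    and coercive: "\<And>u. m * (u \<bullet> u) \<le> u \<bullet> ((2 *\<^sub>R M + Omega_mat H K B) *v u)"
  shows "psd_mat ((1/2) *\<^sub>R Q_mat P0 A0 B K H M - Sigma0 K ((1/2) *\<^sub>R M)
                   - SigmaR K ((m/2) *\<^sub>R mat 1))"
    (is "psd_mat ?G")
proof -
  have "transpose (S0_mat P0 A0) = S0_mat P0 A0"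
    using S0 by (simp add: psd_mat_def)
  then have "transpose ?G = ?G"
    unfolding Q_mat_def Sigma0_def SigmaR_def scaleR_block_mat diff_block_mat transpose_block_mat
    by (simp add: transpose_add transpose_diff transpose_uminus transpose_zero transpose_scalar
        matrix_transpose_mul matrix_mul_assoc transpose_Omega_mat[OF H] M)
  moreover have "z \<bullet> (?G *v z) \<ge> 0" for z
  proof -
    obtain x d where z: "z = block_vec x d"
      by (rule block_vec_cases)
    define s where "s = K *v x - d"
    have "z \<bullet> (?G *v z) = 1/2 * (x \<bullet> (S0_mat P0 A0 *v x))
        + 1/2 * (s \<bullet> ((2 *\<^sub>R M + Omega_mat H K B) *v s) - m * (s \<bullet> s))"
      unfolding z s_def using inner_matrix_vector_commute[OF M, of d "K *v x"]
      by (simp add: matrix_vector_mult_diff_rdistrib inner_diff_right scaleR_matrix_vector_assoc[symmetric]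
          quadratic_form_Q_mat[OF H M] quadratic_form_Sigma0 quadratic_form_SigmaR transpose_scalar M
          matrix_vector_inner_simps algebra_simps del: transpose_matrix_vector)
    then show ?thesis
      using S0 coercive[of s] by (simp add: psd_mat_def)
  qed
  ultimately show ?thesis
    by (simp add: psd_mat_def)
qed

lemma inner_sat_le_quadratic_form:
  fixes x :: "real^'n"
  assumes psd: "psd_mat (W - Sigma0 K T0 - SigmaR K R)"
    and T0: "diag_mat T0" "psd_mat T0" and R: "transpose R = R"
    and bounds: "\<forall>i. 0 \<le> ub $ i" "\<forall>i. 0 \<le> lb $ i"
  defines "z \<equiv> block_vec x (dz ub lb (K *v x))"
  shows "sat ub lb (K *v x) \<bullet> (R *v sat ub lb (K *v x)) \<le> z \<bullet> (W *v z)"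
proof -
  have "0 \<le> z \<bullet> ((W - Sigma0 K T0 - SigmaR K R) *v z)"
    using psd unfolding psd_mat_def by blast
  then have "z \<bullet> (Sigma0 K T0 *v z) + z \<bullet> (SigmaR K R *v z) \<le> z \<bullet> (W *v z)"
    by (simp add: matrix_vector_mult_diff_rdistrib inner_diff_right)
  moreover have "z \<bullet> (Sigma0 K T0 *v z) \<ge> 0"
    using inner_dz_sat_nonneg[OF T0 bounds]
    by (simp add: z_def quadratic_form_Sigma0 diag_mat_transpose[OF T0(1)] diff_dz_eq_sat)
  ultimately show ?thesis
    by (simp add: z_def quadratic_form_SigmaR[OF R] diff_dz_eq_sat)
qed

lemma has_real_derivative_lyapunov_along_flow:
  fixes x :: "real^'n"
  assumes H: "diag_mat H" and P0: "transpose P0 = P0" and M: "transpose M = M"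
    and eq: "P0 ** B - transpose A0 ** transpose K ** H = transpose K ** M"
    and bounds: "\<forall>i. - lb $ i \<le> ub $ i"
  defines "z \<equiv> block_vec x (dz ub lb (K *v x))"
  shows "((\<lambda>t. lyapunov P0 K H ub lb (x + t *\<^sub>R (A0 *v x - B *v sat ub lb (K *v x))))
           has_real_derivative - 1/2 * (z \<bullet> (Q_mat P0 A0 B K H M *v z))) (at 0)"
  using has_real_derivative_lyapunov_along[OF H P0 bounds, of K x "A0 *v x - B *v sat ub lb (K *v x)"]
    lyapunov_derivative_eq_quadratic_form_Q_mat[OF diag_mat_transpose[OF H] P0 M eq,
      of x "dz ub lb (K *v x)"]
  by (simp add: z_def diff_dz_eq_sat)

lemma LMI_certificate:
  fixes K :: "real^'n^'m"
  assumes H: "transpose H = H" and M: "diag_mat M" "psd_mat M"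
    and S0: "psd_mat (S0_mat P0 A0)" and pd: "pd_mat (2 *\<^sub>R M + Omega_mat H K B)"
    and bounds: "\<forall>i. 0 \<le> ub $ i" "\<forall>i. 0 \<le> lb $ i"
  obtains T0 R where "diag_mat T0" "psd_mat T0" "pd_mat R"
    "psd_mat ((1/2) *\<^sub>R Q_mat P0 A0 B K H M - Sigma0 K T0 - SigmaR K R)"
    "\<And>x. lambda_min R * (norm (sat ub lb (K *v x)))\<^sup>2
       \<le> 1/2 * (block_vec x (dz ub lb (K *v x))
                  \<bullet> (Q_mat P0 A0 B K H M *v block_vec x (dz ub lb (K *v x))))"
proof -
  obtain m where "m > 0" and coercive: "\<And>u. m * (u \<bullet> u) \<le> u \<bullet> ((2 *\<^sub>R M + Omega_mat H K B) *v u)"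
    using pd_mat_coercive[OF pd] by blast
  define R :: "real^'m^'m" where "R = (m/2) *\<^sub>R mat 1"
  have LMI: "psd_mat ((1/2) *\<^sub>R Q_mat P0 A0 B K H M - Sigma0 K ((1/2) *\<^sub>R M) - SigmaR K R)"
    unfolding R_def
    using psd_half_Q_mat_minus_Sigmas[OF H _ S0 coercive] M(2) by (simp add: psd_mat_def)
  have T0: "diag_mat ((1/2) *\<^sub>R M)" "psd_mat ((1/2) *\<^sub>R M)"
    using diag_mat_scaleR[OF M(1)] psd_mat_scaleR[OF M(2)] by simp_all
  show ?thesis
  proof (rule that[OF T0 _ LMI])
    show "pd_mat R"
      unfolding R_def using \<open>m > 0\<close> by (simp add: pd_mat_scaleR_mat_1)
    show "lambda_min R * (norm (sat ub lb (K *v x)))\<^sup>2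
       \<le> 1/2 * (block_vec x (dz ub lb (K *v x))
                  \<bullet> (Q_mat P0 A0 B K H M *v block_vec x (dz ub lb (K *v x))))" for x
      using inner_sat_le_quadratic_form[OF LMI T0, of ub lb x] bounds
      by (simp add: R_def lambda_min_scaleR_mat_1 transpose_scalar power2_norm_eq_inner
          flip: scaleR_matrix_vector_assoc)
  qed
qed

theorem lemma4:
  fixes A0 P0 :: "real^'n^'n" and B :: "real^'m^'n" and K :: "real^'n^'m"
    and H M :: "real^'m^'m" and ub lb :: "real^'m"
  assumes ub_pos: "\<forall>i. ub $ i > 0" and lb_pos: "\<forall>i. lb $ i > 0"
    and P0_sym: "transpose P0 = P0"
    and H_diag: "diag_mat H"
    and M_diag: "diag_mat M" and M_psd: "psd_mat M"
    and eq: "P0 ** B - transpose A0 ** transpose K ** H = transpose K ** M"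
    and pd: "pd_mat (2 *\<^sub>R M + Omega_mat H K B)"
  defines "V \<equiv> (\<lambda>x. 1/2 * (x \<bullet> (P0 *v x) + (K *v x) \<bullet> (H *v (K *v x))
                 - dz ub lb (K *v x) \<bullet> (H *v dz ub lb (K *v x))))"
    and "f \<equiv> (\<lambda>x. A0 *v x - B *v sat ub lb (K *v x))"
  shows "(AE x in lborel.
            ((\<lambda>t. V (x + t *\<^sub>R f x)) has_real_derivative
               (- 1/2 * (block_vec x (dz ub lb (K *v x))
                         \<bullet> (Q_mat P0 A0 B K H M *v block_vec x (dz ub lb (K *v x)))))) (at 0))
       \<and> (psd_mat P0 \<and> psd_mat (S0_mat P0 A0) \<longrightarrow>
           (\<exists>T0 R. diag_mat T0 \<and> psd_mat T0 \<and> pd_mat R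
              \<and> psd_mat ((1/2) *\<^sub>R Q_mat P0 A0 B K H M - Sigma0 K T0 - SigmaR K R)
              \<and> (AE x in lborel. \<exists>D. ((\<lambda>t. V (x + t *\<^sub>R f x)) has_real_derivative D) (at 0)
                     \<and> - D \<ge> lambda_min R * (norm (sat ub lb (K *v x)))\<^sup>2)))"
proof -
  have ub_nonneg: "\<forall>i. 0 \<le> ub $ i" and lb_nonneg: "\<forall>i. 0 \<le> lb $ i"
    using ub_pos lb_pos by (simp_all add: less_imp_le)
  then have "\<forall>i. - lb $ i \<le> ub $ i"
    by (meson neg_le_0_iff_le order_trans)
  moreover have "transpose M = M"
    using M_psd by (simp add: psd_mat_def)
  moreover have "V = lyapunov P0 K H ub lb"
    by (simp add: V_def lyapunov_def fun_eq_iff)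
  ultimately have deriv: "((\<lambda>t. V (x + t *\<^sub>R f x)) has_real_derivative
      - 1/2 * (block_vec x (dz ub lb (K *v x))
               \<bullet> (Q_mat P0 A0 B K H M *v block_vec x (dz ub lb (K *v x))))) (at 0)" for x
    unfolding f_def using has_real_derivative_lyapunov_along_flow[OF H_diag P0_sym _ eq] by blast
  show ?thesis (is "?derivative \<and> (_ \<longrightarrow> ?certificate)")
  proof (intro conjI impI)
    show ?derivative
      using deriv by (rule AE_I2)
    assume "psd_mat P0 \<and> psd_mat (S0_mat P0 A0)"
    then show ?certificate
      by (elim conjE LMI_certificate[OF diag_mat_transpose[OF H_diag] M_diag M_psd _ pd ub_nonneg lb_nonneg])
        (intro exI conjI AE_I2, assumption+, rule deriv, force)
  qed
qed

end
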